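(* Let $G$ be a finite simple graph that contains no subgraph isomorphic to $C_n$ for any $n\ge 4$ with $n\not\equiv 0\pmod 4$. Let $u\in V(G)$ and, for $i\ge 1$, let $N_i=\{v\in V(G) : d(u,v)=i\}$. Let $i\ge 1$ and $a,b\in N_i$. If $ab$ is not an edge of any subgraph of $G$ isomorphic to $K_3$, then $ab\notin E(G)$.
   Context: $d(u,v)$ is the shortest-path distance in $G$; $C_n$ is the cycle on $n$ vertices; subgraphs need not be induced. *)

theory Defs
  imports Main "HOL-Library.Extended_Nat"
begin

definition simple_graph :: "'a set \<Rightarrow> ('a \<Rightarrow> 'a \<Rightarrow> bool) \<Rightarrow> bool" where
  "simple_graph V E \<longleftrightarrow> finite V \<and> (\<forall>x y. E x y \<longrightarrow> E y x)
     \<and> (\<forall>x. \<not> E x x) \<and> (\<forall>x y. E x y \<longrightarrow> x \<in> V \<and> y \<in> V)"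

definition is_walk :: "'a set \<Rightarrow> ('a \<Rightarrow> 'a \<Rightarrow> bool) \<Rightarrow> 'a list \<Rightarrow> bool" where
  "is_walk V E xs \<longleftrightarrow> xs \<noteq> [] \<and> set xs \<subseteq> V
     \<and> (\<forall>i. Suc i < length xs \<longrightarrow> E (xs ! i) (xs ! Suc i))"

text \<open>Shortest-path distance (infinity if unreachable).\<close>
definition gdist :: "'a set \<Rightarrow> ('a \<Rightarrow> 'a \<Rightarrow> bool) \<Rightarrow> 'a \<Rightarrow> 'a \<Rightarrow> enat" where
  "gdist V E u v = (INF xs \<in> {xs. is_walk V E xs \<and> hd xs = u \<and> last xs = v}.
                      enat (length xs - 1))"

definition layer :: "'a set \<Rightarrow> ('a \<Rightarrow> 'a \<Rightarrow> bool) \<Rightarrow> 'a \<Rightarrow> nat \<Rightarrow> 'a set" where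
  "layer V E u i = {v \<in> V. gdist V E u v = enat i}"

definition has_cycle_subgraph :: "'a set \<Rightarrow> ('a \<Rightarrow> 'a \<Rightarrow> bool) \<Rightarrow> nat \<Rightarrow> bool" where
  "has_cycle_subgraph V E n \<longleftrightarrow> (\<exists>xs. length xs = n \<and> distinct xs \<and> set xs \<subseteq> V
     \<and> (\<forall>i < n. E (xs ! i) (xs ! ((i + 1) mod n))))"

definition edge_in_triangle :: "'a set \<Rightarrow> ('a \<Rightarrow> 'a \<Rightarrow> bool) \<Rightarrow> 'a \<Rightarrow> 'a \<Rightarrow> bool" where
  "edge_in_triangle V E a b \<longleftrightarrow> (\<exists>x y z. distinct [x, y, z] \<and> {x, y, z} \<subseteq> V
     \<and> E x y \<and> E y z \<and> E x z \<and> a \<noteq> b \<and> a \<in> {x, y, z} \<and> b \<in> {x, y, z})"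

end

theory Submission
  imports Defs
begin

text \<open>Take geodesics p and q from u to a and b and let j be the last index at which they agree.
  Vertices of a geodesic are told apart by their distance from u, so p and q meet only at
  equal indices, and after j not at all. If j = i - 1, then p_j, a, b is a triangle.
  Otherwise p_j \<dots> a, followed by the edge ab and b \<dots> q_(j+1), is a cycle of odd length
  2(i - j) + 1 \<ge> 5, which is excluded.\<close>

lemma is_walk_iff_successively:
  "is_walk V E xs \<longleftrightarrow> xs \<noteq> [] \<and> set xs \<subseteq> V \<and> successively E xs"
  by (simp add: is_walk_def successively_conv_nth)

lemma successively_take_drop:
  assumes "successively P xs"
  shows "successively P (take k xs)" and "successively P (drop k xs)"
  using assms successively_append_iff[of P "take k xs" "drop k xs"] by simp_all

lemma is_walk_take: "is_walk V E xs \<Longrightarrow> 0 < k \<Longrightarrow> is_walk V E (take k xs)"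
  unfolding is_walk_iff_successively
  by (metis order_trans set_take_subset successively_take_drop(1) take_eq_Nil not_gr0)

lemma is_walk_drop: "is_walk V E xs \<Longrightarrow> k < length xs \<Longrightarrow> is_walk V E (drop k xs)"
  unfolding is_walk_iff_successively
  by (meson order_trans set_drop_subset successively_take_drop(2) drop_eq_Nil not_le)

lemma is_walk_append:
  "is_walk V E xs \<Longrightarrow> is_walk V E ys \<Longrightarrow> E (last xs) (hd ys) \<Longrightarrow> is_walk V E (xs @ ys)"
  by (simp add: is_walk_iff_successively successively_append_iff)

lemma is_walk_join:
  "is_walk V E xs \<Longrightarrow> is_walk V E ys \<Longrightarrow> last xs = hd ys \<Longrightarrow> is_walk V E (xs @ tl ys)"
  by (cases ys) (auto simp: is_walk_iff_successively successively_append_iff successively_Cons)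

lemma is_walk_rev: "symp E \<Longrightarrow> is_walk V E xs \<Longrightarrow> is_walk V E (rev xs)"
  by (auto simp: is_walk_iff_successively elim: successively_mono dest: sympD)

lemma gdist_le_walk:
  assumes "is_walk V E xs" "hd xs = u" "last xs = v"
  shows "gdist V E u v \<le> enat (length xs - 1)"
  unfolding gdist_def by (rule INF_lower) (use assms in auto)

lemma gdist_eq_enatE:
  assumes "gdist V E u v = enat n"
  obtains xs where "is_walk V E xs" "hd xs = u" "last xs = v" "length xs = Suc n"
proof -
  define W where "W = {xs. is_walk V E xs \<and> hd xs = u \<and> last xs = v}"
  have gdist_W: "gdist V E u v = Inf ((\<lambda>xs. enat (length xs - 1)) ` W)"
    unfolding gdist_def W_def ..
  have "W \<noteq> {}"
    using assms by (auto simp: gdist_W top_enat_def)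
  then have "gdist V E u v \<in> (\<lambda>xs. enat (length xs - 1)) ` W"
    unfolding gdist_W by (blast intro: wellorder_InfI)
  then obtain xs where "xs \<in> W" "enat (length xs - 1) = enat n"
    using assms by auto
  moreover from \<open>xs \<in> W\<close> have "xs \<noteq> []"
    by (simp add: W_def is_walk_def)
  ultimately show ?thesis
    by (intro that[of xs]) (auto simp: W_def)
qed

lemma gdist_le_gdist_plus_walk:
  assumes ys: "is_walk V E ys" "hd ys = x" "last ys = y"
  shows "gdist V E u y \<le> gdist V E u x + enat (length ys - 1)"
proof (cases "gdist V E u x")
  case (enat d)
  then obtain r where r: "is_walk V E r" "hd r = u" "last r = x" "length r = Suc d"
    by (rule gdist_eq_enatE)
  have "r \<noteq> []" "ys \<noteq> []"
    using r ys by (auto simp: is_walk_def)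
  then have "r @ tl ys = butlast r @ ys"
    using r(3) ys(2) by (metis append_butlast_last_id append_Cons append_assoc append_Nil list.collapse)
  then have "last (r @ tl ys) = y" "length (r @ tl ys) = d + length ys"
    using r ys \<open>ys \<noteq> []\<close> by auto
  moreover have "hd (r @ tl ys) = u"
    using r \<open>r \<noteq> []\<close> by simp
  moreover have "is_walk V E (r @ tl ys)"
    using is_walk_join[OF r(1) ys(1)] r(3) ys(2) by simp
  ultimately have "gdist V E u y \<le> enat (d + length ys - 1)"
    by (metis gdist_le_walk)
  then show ?thesis
    using enat \<open>ys \<noteq> []\<close> by (cases ys) auto
qed simp

definition geodesic :: "'a set \<Rightarrow> ('a \<Rightarrow> 'a \<Rightarrow> bool) \<Rightarrow> 'a list \<Rightarrow> bool" where
  "geodesic V E xs \<longleftrightarrow> is_walk V E xs \<and> gdist V E (hd xs) (last xs) = enat (length xs - 1)"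

lemma geodesic_exists:
  assumes "gdist V E u v = enat n"
  obtains xs where "geodesic V E xs" "hd xs = u" "last xs = v" "length xs = Suc n"
  using assms by (auto simp: geodesic_def elim: gdist_eq_enatE)

lemma gdist_geodesic_nth:
  assumes geo: "geodesic V E xs" and k: "k < length xs"
  shows "gdist V E (hd xs) (xs ! k) = enat k"
proof (rule antisym)
  have walk: "is_walk V E xs"
    using geo by (simp add: geodesic_def)
  have "hd (take (Suc k) xs) = hd xs"
    using k by (cases xs) simp_all
  moreover have "last (take (Suc k) xs) = xs ! k"
    using k by (simp add: take_Suc_conv_app_nth)
  ultimately have "gdist V E (hd xs) (xs ! k) \<le> enat (length (take (Suc k) xs) - 1)"
    using gdist_le_walk[OF is_walk_take[OF walk, of "Suc k"]] by simp
  then show "gdist V E (hd xs) (xs ! k) \<le> enat k"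
    using k by simp
  have "hd (drop k xs) = xs ! k" "last (drop k xs) = last xs"
    using k by (simp_all add: hd_drop_conv_nth)
  then have "gdist V E (hd xs) (last xs) \<le> gdist V E (hd xs) (xs ! k) + enat (length xs - 1 - k)"
    using gdist_le_gdist_plus_walk[OF is_walk_drop[OF walk k]] by simp
  moreover have "gdist V E (hd xs) (last xs) = enat (length xs - 1)"
    using geo by (simp add: geodesic_def)
  ultimately show "enat k \<le> gdist V E (hd xs) (xs ! k)"
    using k by (cases "gdist V E (hd xs) (xs ! k)") simp_all
qed

lemma geodesic_nth_eq_imp_eq:
  assumes "geodesic V E xs" "geodesic V E ys" "hd xs = hd ys"
    and "k < length xs" "l < length ys" "xs ! k = ys ! l"
  shows "k = l"
  using gdist_geodesic_nth[of V E xs k] gdist_geodesic_nth[of V E ys l] assms by simp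

lemma distinct_geodesic: "geodesic V E xs \<Longrightarrow> distinct xs"
  by (auto simp: distinct_conv_nth dest: geodesic_nth_eq_imp_eq)

lemma has_cycle_subgraphI:
  assumes "is_walk V E xs" "distinct xs" "E (last xs) (hd xs)"
  shows "has_cycle_subgraph V E (length xs)"
  unfolding has_cycle_subgraph_def
proof (intro exI conjI allI impI)
  fix k assume k: "k < length xs"
  show "E (xs ! k) (xs ! ((k + 1) mod length xs))"
  proof (cases "Suc k < length xs")
    case True
    then show ?thesis
      using assms(1) by (simp add: is_walk_def)
  next
    case False
    then have "Suc k = length xs"
      using k by simp
    then have "xs ! k = last xs" "(k + 1) mod length xs = 0"
      by (metis diff_Suc_1 last_conv_nth list.size(3) nat.distinct(1), simp)
    moreover have "xs ! 0 = hd xs"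
      using k by (cases xs) simp_all
    ultimately show ?thesis
      using assms(3) by simp
  qed
qed (use assms in \<open>auto simp: is_walk_def\<close>)

lemma edge_in_triangleI:
  assumes "simple_graph V E" "E a b" "E c a" "E c b"
  shows "edge_in_triangle V E a b"
proof -
  have "distinct [c, a, b]" "{c, a, b} \<subseteq> V"
    using assms unfolding simple_graph_def by auto
  then show ?thesis
    unfolding edge_in_triangle_def using assms(2-4)
    by (intro exI[of _ c] exI[of _ a] exI[of _ b]) auto
qed

lemma last_agreement_index:
  fixes f g :: "nat \<Rightarrow> 'a"
  assumes "f 0 = g 0" "f i \<noteq> g i"
  obtains j where "j < i" "f j = g j" "\<And>k. j < k \<Longrightarrow> k \<le> i \<Longrightarrow> f k \<noteq> g k"
proof
  define J where "J = {k. k \<le> i \<and> f k = g k}"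
  have "finite J" "0 \<in> J"
    using assms(1) by (auto simp: J_def)
  then have "Max J \<in> J"
    using Max_in by blast
  then show "Max J < i" "f (Max J) = g (Max J)"
    using assms(2) by (auto simp: J_def order.order_iff_strict)
  show "f k \<noteq> g k" if "Max J < k" "k \<le> i" for k
  proof
    assume "f k = g k"
    with that(2) have "k \<in> J"
      by (simp add: J_def)
    with that(1) show False
      using Max_ge[OF \<open>finite J\<close>] by fastforce
  qed
qed

lemma has_cycle_subgraph_diverging_geodesics:
  assumes "symp E"
    and p: "geodesic V E p" "length p = Suc i"
    and q: "geodesic V E q" "length q = Suc i" "hd q = hd p"
    and "E (last p) (last q)"
    and j: "j < i" "p ! j = q ! j" "\<And>k. j < k \<Longrightarrow> k \<le> i \<Longrightarrow> p ! k \<noteq> q ! k"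
  shows "has_cycle_subgraph V E (2 * (i - j) + 1)"
proof -
  define cyc where "cyc = drop j p @ rev (drop (Suc j) q)"
  have walks: "is_walk V E p" "is_walk V E q"
    using p q by (simp_all add: geodesic_def)
  have "is_walk V E cyc"
    unfolding cyc_def
  proof (rule is_walk_append)
    show "is_walk V E (drop j p)" "is_walk V E (rev (drop (Suc j) q))"
      using is_walk_drop[OF walks(1)] is_walk_rev[OF \<open>symp E\<close> is_walk_drop[OF walks(2)]] j p q
      by simp_all
    show "E (last (drop j p)) (hd (rev (drop (Suc j) q)))"
      using assms(7) j p q by (simp add: hd_rev)
  qed
  moreover have "E (last cyc) (hd cyc)"
  proof -
    have "E (q ! j) (q ! Suc j)"
      using walks(2) j q by (simp add: is_walk_def)
    then show ?thesis
      using \<open>symp E\<close> j p q by (simp add: cyc_def last_rev hd_drop_conv_nth sympD)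
  qed
  moreover have "distinct cyc"
  proof -
    have "x \<notin> set (drop (Suc j) q)" if x_p: "x \<in> set (drop j p)" for x
    proof
      assume "x \<in> set (drop (Suc j) q)"
      then obtain t where t: "t < i - j" "x = q ! (Suc j + t)"
        using q by (auto simp: in_set_conv_nth)
      obtain s where s: "s < Suc i - j" "x = p ! (j + s)"
        using x_p p by (auto simp: in_set_conv_nth)
      have "j + s = Suc j + t"
        using geodesic_nth_eq_imp_eq[OF p(1) q(1)] s t p q by simp
      moreover from this have "j < j + s" "j + s \<le> i"
        using t(1) by linarith+
      ultimately show False
        using j(3)[of "j + s"] s(2) t(2) by metis
    qed
    then have "set (drop j p) \<inter> set (drop (Suc j) q) = {}"
      by blast
    then show ?thesis
      using distinct_geodesic[OF p(1)] distinct_geodesic[OF q(1)] by (simp add: cyc_def)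
  qed
  moreover have "length cyc = 2 * (i - j) + 1"
    using j p q by (simp add: cyc_def)
  ultimately show ?thesis
    using has_cycle_subgraphI[of V E cyc] by simp
qed

theorem mainTheorem8:
  fixes V :: "'a set" and E :: "'a \<Rightarrow> 'a \<Rightarrow> bool" and u a b :: 'a and i :: nat
  assumes "simple_graph V E"
    and "\<forall>n. n \<ge> 4 \<and> n mod 4 \<noteq> 0 \<longrightarrow> \<not> has_cycle_subgraph V E n"
    and "u \<in> V"
    and "i \<ge> 1"
    and "a \<in> layer V E u i" and "b \<in> layer V E u i"
    and "\<not> edge_in_triangle V E a b"
  shows "\<not> E a b"
proof
  assume ab: "E a b"
  have "symp E" "a \<noteq> b"
    using assms(1) ab by (auto simp: simple_graph_def symp_def)
  obtain p where p: "geodesic V E p" "hd p = u" "last p = a" "length p = Suc i"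
    using assms(5) by (auto simp: layer_def elim: geodesic_exists)
  obtain q where q: "geodesic V E q" "hd q = u" "last q = b" "length q = Suc i"
    using assms(6) by (auto simp: layer_def elim: geodesic_exists)
  have "p \<noteq> []" "q \<noteq> []"
    using p(4) q(4) by auto
  then have "p ! 0 = u" "q ! 0 = u" "p ! i = a" "q ! i = b"
    using p q by (auto simp: hd_conv_nth last_conv_nth)
  with \<open>a \<noteq> b\<close> have "p ! 0 = q ! 0" "p ! i \<noteq> q ! i"
    by simp_all
  then obtain j where j: "j < i" "p ! j = q ! j" "\<And>k. j < k \<Longrightarrow> k \<le> i \<Longrightarrow> p ! k \<noteq> q ! k"
    using last_agreement_index[of "(!) p" "(!) q" i] by blast
  consider "i = Suc j" | "Suc j < i"
    using j(1) by linarith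
  then show False
  proof cases
    case 1
    then have "E (p ! j) a" "E (p ! j) b"
      using p q j(2) by (auto simp: geodesic_def is_walk_def last_conv_nth)
    with assms(7) show False
      using edge_in_triangleI[OF assms(1) ab] by blast
  next
    case 2
    have "has_cycle_subgraph V E (2 * (i - j) + 1)"
      using has_cycle_subgraph_diverging_geodesics[OF \<open>symp E\<close> p(1,4) q(1,4)] p q ab j by simp
    moreover have "2 * (i - j) + 1 \<ge> 4" "(2 * (i - j) + 1) mod 4 \<noteq> 0"
      using 2 by presburger+
    ultimately show False
      using assms(2) by blast
  qed
qed

end
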